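(* If a graph $G$ has three distinct cutvertices lying in the same connected component of $G$, then $G$ does not belong to DH $\cap$ co-DH.
   Context: All graphs are finite and simple. A cutvertex is a vertex whose deletion increases the number of connected components. A graph is distance-hereditary if it has no induced subgraph isomorphic to a hole (an induced cycle of length at least $5$), the house (a $5$-cycle plus one chord), the domino (a $6$-cycle $v_1\dots v_6$ plus the chord $v_1v_4$), or the gem ($P_4$ plus a vertex adjacent to all four of its vertices). DH $\cap$ co-DH is the class of graphs $G$ such that both $G$ and its complement are distance-hereditary. *)

theory Defs
  imports Main
begin

definition simple_graph :: "'a set \<Rightarrow> ('a \<Rightarrow> 'a \<Rightarrow> bool) \<Rightarrow> bool" where
  "simple_graph V E \<longleftrightarrow> finite V \<and> (\<forall>x y. E x y \<longrightarrow> x \<in> V \<and> y \<in> V)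
     \<and> (\<forall>x y. E x y \<longrightarrow> E y x) \<and> (\<forall>x. \<not> E x x)"

definition complement :: "'a set \<Rightarrow> ('a \<Rightarrow> 'a \<Rightarrow> bool) \<Rightarrow> 'a \<Rightarrow> 'a \<Rightarrow> bool" where
  "complement V E x y \<longleftrightarrow> x \<in> V \<and> y \<in> V \<and> x \<noteq> y \<and> \<not> E x y"

definition reach :: "'a set \<Rightarrow> ('a \<Rightarrow> 'a \<Rightarrow> bool) \<Rightarrow> ('a \<times> 'a) set" where
  "reach V E = ({(x, y). x \<in> V \<and> y \<in> V \<and> E x y}\<^sup>*) \<inter> (V \<times> V)"

definition num_components :: "'a set \<Rightarrow> ('a \<Rightarrow> 'a \<Rightarrow> bool) \<Rightarrow> nat" where
  "num_components V E = card (V // reach V E)"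

text \<open>Deleting v: vertex set V - {v}; edges are automatically restricted by reach.\<close>
definition cutvertex :: "'a set \<Rightarrow> ('a \<Rightarrow> 'a \<Rightarrow> bool) \<Rightarrow> 'a \<Rightarrow> bool" where
  "cutvertex V E v \<longleftrightarrow> v \<in> V \<and> num_components (V - {v}) E > num_components V E"

definition has_induced :: "'a set \<Rightarrow> ('a \<Rightarrow> 'a \<Rightarrow> bool) \<Rightarrow> 'b set \<Rightarrow> ('b \<Rightarrow> 'b \<Rightarrow> bool) \<Rightarrow> bool" where
  "has_induced V E HV HE \<longleftrightarrow> (\<exists>f. inj_on f HV \<and> f ` HV \<subseteq> V \<and>
     (\<forall>x\<in>HV. \<forall>y\<in>HV. E (f x) (f y) \<longleftrightarrow> HE x y))"

definition cycle_edge :: "nat \<Rightarrow> nat \<Rightarrow> nat \<Rightarrow> bool" where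
  "cycle_edge n i j \<longleftrightarrow> i < n \<and> j < n \<and> (j = Suc i mod n \<or> i = Suc j mod n)"

definition house_edge :: "nat \<Rightarrow> nat \<Rightarrow> bool" where
  "house_edge i j \<longleftrightarrow> cycle_edge 5 i j \<or> {i, j} = {0, 2}"

definition domino_edge :: "nat \<Rightarrow> nat \<Rightarrow> bool" where
  "domino_edge i j \<longleftrightarrow> cycle_edge 6 i j \<or> {i, j} = {0, 3}"

definition gem_edge :: "nat \<Rightarrow> nat \<Rightarrow> bool" where
  "gem_edge i j \<longleftrightarrow> i < 5 \<and> j < 5 \<and> i \<noteq> j \<and>
     ((i < 4 \<and> j < 4 \<and> (j = Suc i \<or> i = Suc j)) \<or> i = 4 \<or> j = 4)"

definition distance_hereditary :: "'a set \<Rightarrow> ('a \<Rightarrow> 'a \<Rightarrow> bool) \<Rightarrow> bool" where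
  "distance_hereditary V E \<longleftrightarrow>
     (\<forall>n\<ge>5. \<not> has_induced V E {0..<n} (cycle_edge n)) \<and>
     \<not> has_induced V E {0..<5} house_edge \<and>
     \<not> has_induced V E {0..<6} domino_edge \<and>
     \<not> has_induced V E {0..<5} gem_edge"

definition DH_coDH :: "'a set \<Rightarrow> ('a \<Rightarrow> 'a \<Rightarrow> bool) \<Rightarrow> bool" where
  "DH_coDH V E \<longleftrightarrow> distance_hereditary V E \<and> distance_hereditary V (complement V E)"

end

theory Submission
  imports Defs
begin

text \<open>A cutvertex c has, for every other vertex d, a neighbour a that lies in a component of
G - c not containing d; such a is non-adjacent to everything in the component of d.
If two of the three cutvertices, x and y, are non-adjacent, a shortest x-y path has at least
two edges, and a private neighbour of x followed by the first four vertices of the path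
(or a_x, x, p, y, a_y if the path has exactly two edges) is an induced P5, whose complement is
the house. Otherwise the cutvertices form a triangle u v w, and a_u u v a_v is an induced P4
with a_w non-adjacent to all of it; the complement of P4 + K1 is the gem.\<close>

lemma simple_graph_symp: "simple_graph V E \<Longrightarrow> symp E"
  unfolding simple_graph_def symp_def by blast

lemma simple_graph_adjacent_neq: "simple_graph V E \<Longrightarrow> E x y \<Longrightarrow> x \<noteq> y"
  unfolding simple_graph_def by blast

lemma simple_graph_adjacent_mem: "simple_graph V E \<Longrightarrow> E x y \<Longrightarrow> x \<in> V \<and> y \<in> V"
  unfolding simple_graph_def by blast

lemma reach_memD: "(x, y) \<in> reach W E \<Longrightarrow> x \<in> W \<and> y \<in> W"
  unfolding reach_def by auto

lemma reach_refl: "x \<in> W \<Longrightarrow> (x, x) \<in> reach W E"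
  unfolding reach_def by auto

lemma reach_edge: "x \<in> W \<Longrightarrow> y \<in> W \<Longrightarrow> E x y \<Longrightarrow> (x, y) \<in> reach W E"
  unfolding reach_def by auto

lemma reach_trans: "(x, y) \<in> reach W E \<Longrightarrow> (y, z) \<in> reach W E \<Longrightarrow> (x, z) \<in> reach W E"
  unfolding reach_def by (auto intro: rtrancl_trans)

lemma reach_sym:
  assumes "symp E" and "(x, y) \<in> reach W E"
  shows "(y, x) \<in> reach W E"
proof -
  let ?r = "{(x, y). x \<in> W \<and> y \<in> W \<and> E x y}"
  have "?r\<inverse> = ?r" using assms(1) by (auto dest: sympD)
  moreover have "(y, x) \<in> (?r\<inverse>)\<^sup>*"
    using assms(2) by (simp add: reach_def rtrancl_converseI)
  ultimately show ?thesis using assms(2) by (simp add: reach_def)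
qed

lemma reach_mono: "W \<subseteq> V \<Longrightarrow> reach W E \<subseteq> reach V E"
  unfolding reach_def by (auto elim!: rtrancl_mono[THEN subsetD, rotated])

lemma reach_Image_reach:
  assumes "W \<subseteq> V" "p \<in> W"
  shows "reach V E `` (reach W E `` {p}) = reach V E `` {p}"
proof
  show "reach V E `` (reach W E `` {p}) \<subseteq> reach V E `` {p}"
  proof
    fix z assume "z \<in> reach V E `` (reach W E `` {p})"
    then obtain m where "(p, m) \<in> reach V E" "(m, z) \<in> reach V E"
      using reach_mono[OF assms(1)] by blast
    then have "(p, z) \<in> reach V E" by (rule reach_trans)
    then show "z \<in> reach V E `` {p}" by blast
  qed
  have "(p, p) \<in> reach W E" using assms(2) by (rule reach_refl)
  then show "reach V E `` {p} \<subseteq> reach V E `` (reach W E `` {p})" by blast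
qed

lemma equiv_reach: "symp E \<Longrightarrow> equiv W (reach W E)"
  by (rule equivI)
    (auto intro!: refl_onI symI transI reach_refl dest: reach_memD reach_sym reach_trans)

lemma separated_not_adjacent:
  assumes "(a, t) \<notin> reach W E" and "(z, t) \<in> reach W E" and "a \<in> W"
  shows "a \<noteq> z \<and> \<not> E a z"
  using assms reach_trans[OF reach_edge[of a W z E], of t] by (auto dest: reach_memD)

lemma successively_reach_hd:
  "successively E ps \<Longrightarrow> set ps \<subseteq> W \<Longrightarrow> a \<in> set ps \<Longrightarrow> (hd ps, a) \<in> reach W E"
proof (induction ps rule: induct_list012)
  case (3 x y zs)
  show ?case
  proof (cases "a = x")
    case False
    then have "(y, a) \<in> reach W E" using 3 by simp
    moreover have "(x, y) \<in> reach W E" using 3 by (simp add: reach_edge)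
    ultimately show ?thesis by (simp add: reach_trans)
  qed (use 3 in \<open>simp add: reach_refl\<close>)
qed (auto simp: reach_refl)

lemma successively_reach:
  assumes "symp E" "successively E ps" "set ps \<subseteq> W" "a \<in> set ps" "b \<in> set ps"
  shows "(a, b) \<in> reach W E"
  using assms successively_reach_hd[of E ps W] reach_sym[OF assms(1)] reach_trans by metis

lemma successively_take: "successively E xs \<Longrightarrow> successively E (take n xs)"
  by (metis append_take_drop_id successively_append_iff)

lemma successively_drop: "successively E xs \<Longrightarrow> successively E (drop n xs)"
  by (metis append_take_drop_id successively_append_iff)

lemma successively_tl_reach:
  assumes "symp E" "successively E ps" "distinct ps" "set ps \<subseteq> W"
    and "a \<in> set (tl ps)" "b \<in> set (tl ps)"
  shows "(a, b) \<in> reach (W - {hd ps}) E"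
proof (rule successively_reach[OF assms(1) _ _ assms(5,6)])
  show "successively E (tl ps)" using successively_drop[OF assms(2), of 1] by (simp add: drop_Suc)
  show "set (tl ps) \<subseteq> W - {hd ps}" using assms(3,4) by (cases ps) auto
qed

lemma successively_butlast_reach:
  assumes "symp E" "successively E ps" "distinct ps" "set ps \<subseteq> W"
    and "a \<in> set (butlast ps)" "b \<in> set (butlast ps)"
  shows "(a, b) \<in> reach (W - {last ps}) E"
proof -
  have "(\<lambda>x y. E y x) = E" using assms(1) by (auto dest: sympD)
  then have "successively E (rev ps)" using assms(2) by (simp only: successively_rev)
  moreover have "tl (rev ps) = rev (butlast ps)" by (metis butlast_rev rev_rev_ident)
  ultimately show ?thesis
    using successively_tl_reach[OF assms(1), of "rev ps" W a b] assms by (simp add: hd_rev)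
qed

subsection \<open>Cutvertices\<close>

lemma cutvertex_separates:
  assumes G: "simple_graph V E" and c: "cutvertex V E c"
  shows "\<exists>p q. p \<in> V - {c} \<and> q \<in> V - {c} \<and> (p, q) \<in> reach V E \<and>
    (p, q) \<notin> reach (V - {c}) E"
proof (rule ccontr)
  define R where "R = reach V E"
  define R' where "R' = reach (V - {c}) E"
  assume "\<not> ?thesis"
  then have joined: "(p, q) \<in> R'" if "p \<in> V - {c}" "q \<in> V - {c}" "(p, q) \<in> R" for p q
    using that unfolding R_def R'_def by blast
  have eR: "equiv V R" and eR': "equiv (V - {c}) R'"
    unfolding R_def R'_def using equiv_reach simple_graph_symp[OF G] by blast+
  have classes: "R `` (R' `` {p}) = R `` {p}" if "p \<in> V - {c}" for p
    using reach_Image_reach[of "V - {c}" V p E] that unfolding R_def R'_def by blast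
  \<comment> \<open>every component of G - c lies in a different component of G\<close>
  have "inj_on ((``) R) ((V - {c}) // R')"
  proof (rule inj_onI)
    fix X Y assume X: "X \<in> (V - {c}) // R'" and Y: "Y \<in> (V - {c}) // R'"
      and eq: "R `` X = R `` Y"
    obtain p where p: "p \<in> V - {c}" "X = R' `` {p}" using X by (auto elim: quotientE)
    obtain q where q: "q \<in> V - {c}" "Y = R' `` {q}" using Y by (auto elim: quotientE)
    have "(p, q) \<in> R" using eq classes p q eR by (simp add: eq_equiv_class_iff)
    then show "X = Y" using joined p q eR' by (simp add: equiv_class_eq)
  qed
  moreover have "(``) R ` ((V - {c}) // R') \<subseteq> V // R"
  proof
    fix Z assume "Z \<in> (``) R ` ((V - {c}) // R')"
    then obtain p where "p \<in> V - {c}" "Z = R `` (R' `` {p})" by (auto elim: quotientE)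
    then show "Z \<in> V // R" using classes by (auto intro: quotientI)
  qed
  moreover have "finite (V // R)"
    using G by (intro finite_quotient) (auto simp: simple_graph_def R_def dest: reach_memD)
  ultimately have "card ((V - {c}) // R') \<le> card (V // R)"
    by (rule card_inj_on_le)
  then show False using c unfolding cutvertex_def num_components_def R_def R'_def by simp
qed

lemma cutvertex_private_neighbour:
  assumes G: "simple_graph V E" and c: "cutvertex V E c" and d: "d \<in> V - {c}"
  shows "\<exists>a. E c a \<and> (a, d) \<notin> reach (V - {c}) E"
proof (rule ccontr)
  assume "\<not> ?thesis"
  then have nbr: "(a, d) \<in> reach (V - {c}) E" if "E c a" for a
    using that by blast
  have sym: "symp E" using simple_graph_symp[OF G] .
  obtain p q where pq: "p \<in> V - {c}" "q \<in> V - {c}" "(p, q) \<in> reach V E"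
    "(p, q) \<notin> reach (V - {c}) E"
    using cutvertex_separates[OF G c] by blast
  let ?r = "{(x, y). x \<in> V \<and> y \<in> V \<and> E x y}"
  \<comment> \<open>along a p-q walk in G, every vertex other than c is joined to p in G - c,
      and c itself only occurs if p is joined to d in G - c\<close>
  have along_walk: "(p, if z = c then d else z) \<in> reach (V - {c}) E"
    if "(p, z) \<in> ?r\<^sup>*" for z
    using that
  proof (induction rule: rtrancl_induct)
    case base
    then show ?case using pq(1) by (simp add: reach_refl)
  next
    case (step y z)
    then have yz: "y \<in> V" "z \<in> V" "E y z" "y \<noteq> z"
      using simple_graph_adjacent_neq[OF G] by auto
    have "(if y = c then d else y, if z = c then d else z) \<in> reach (V - {c}) E"
    proof (cases "y = c")
      case True
      then show ?thesis using nbr yz reach_sym[OF sym] by auto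
    next
      case False
      then show ?thesis
        using nbr yz sym by (cases "z = c") (auto simp: reach_edge dest: sympD)
    qed
    with step.IH show ?case by (rule reach_trans)
  qed
  have "(p, q) \<in> ?r\<^sup>*" using pq(3) by (simp add: reach_def)
  from along_walk[OF this] have "(p, q) \<in> reach (V - {c}) E" using pq(2) by simp
  then show False using pq(4) by simp
qed

subsection \<open>Induced paths\<close>

definition induced_path :: "('a \<Rightarrow> 'a \<Rightarrow> bool) \<Rightarrow> 'a list \<Rightarrow> bool" where
  "induced_path E ps \<longleftrightarrow> distinct ps \<and> successively E ps \<and>
     (\<forall>i j. Suc i < j \<longrightarrow> j < length ps \<longrightarrow> \<not> E (ps ! i) (ps ! j))"

lemma rtrancl_imp_walk:
  assumes "(x, y) \<in> {(a, b). a \<in> V \<and> b \<in> V \<and> E a b}\<^sup>*" and "x \<in> V"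
  shows "\<exists>ps. ps \<noteq> [] \<and> successively E ps \<and> hd ps = x \<and> last ps = y \<and> set ps \<subseteq> V"
  using assms(1)
proof (induction rule: rtrancl_induct)
  case base
  then show ?case using assms(2) by (intro exI[of _ "[x]"]) simp
next
  case (step y z)
  then obtain ps where "ps \<noteq> []" "successively E ps" "hd ps = x" "last ps = y" "set ps \<subseteq> V"
    by blast
  with step(2) show ?case
    by (intro exI[of _ "ps @ [z]"]) (auto simp: successively_append_iff)
qed

lemma successively_nonadjacent_ends:
  assumes "successively E ps" "ps \<noteq> []" "hd ps = x" "last ps = y" "x \<noteq> y" "\<not> E x y"
  obtains p1 p2 rest where "ps = x # p1 # p2 # rest"
proof -
  obtain p1 ps' where "ps = x # p1 # ps'"
    using assms(2-5) by (cases ps; cases "tl ps") auto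
  moreover have "ps' \<noteq> []" using calculation assms by auto
  ultimately show thesis using that by (cases ps') auto
qed

lemma successively_take_drop:
  assumes "successively E ps" "i \<le> j" "j < length ps"
    and "0 < i \<Longrightarrow> E (ps ! (i - 1)) (ps ! j)"
  shows "successively E (take i ps @ drop j ps)"
proof (cases i)
  case (Suc k)
  then have "last (take i ps) = ps ! (i - 1)" using assms(2,3)
    by (simp add: take_Suc_conv_app_nth)
  then show ?thesis using assms Suc
    by (simp add: successively_append_iff hd_drop_conv_nth successively_take successively_drop)
qed (simp add: assms successively_drop)

lemma reach_imp_induced_path:
  assumes "(x, y) \<in> reach V E"
  obtains ps where "ps \<noteq> []" "hd ps = x" "last ps = y" "set ps \<subseteq> V" "induced_path E ps"
proof -
  let ?P = "\<lambda>ps. ps \<noteq> [] \<and> successively E ps \<and> hd ps = x \<and> last ps = y \<and> set ps \<subseteq> V"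
  have "\<exists>ps. ?P ps" using assms rtrancl_imp_walk[of x y V E] by (auto simp: reach_def)
  then obtain ps where P: "?P ps" and min: "\<And>qs. ?P qs \<Longrightarrow> length ps \<le> length qs"
    using ex_has_least_nat[where P = ?P and m = length] by blast
  \<comment> \<open>cutting out ps ! i .. ps ! (j - 1) would give a shorter walk\<close>
  have no_shortcut: False
    if "i < j" "j < length ps" "0 < i \<Longrightarrow> E (ps ! (i - 1)) (ps ! j)" "i = 0 \<Longrightarrow> ps ! j = ps ! 0"
    for i j
  proof -
    let ?qs = "take i ps @ drop j ps"
    have "successively E ?qs" using successively_take_drop[of E ps i j] P that by simp
    moreover have "hd ?qs = hd ps"
    proof (cases "i = 0")
      case True
      then have "hd ?qs = ps ! j" using that by (simp add: hd_drop_conv_nth)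
      then show ?thesis using True that P by (auto simp: hd_conv_nth)
    next
      case False
      then show ?thesis using that P by (simp add: hd_append)
    qed
    moreover have "set ?qs \<subseteq> V" using P set_take_subset set_drop_subset by fastforce
    ultimately have "?P ?qs" using that P by auto
    then show False using min[of ?qs] that by simp
  qed
  have "distinct ps"
  proof (rule ccontr)
    assume "\<not> distinct ps"
    then obtain i j where "i < j" "j < length ps" "ps ! i = ps ! j"
      by (metis distinct_conv_nth linorder_neqE_nat)
    then show False
      using no_shortcut[of i j] successively_nth[of E ps "i - 1"] P by fastforce
  qed
  moreover have "\<not> E (ps ! i) (ps ! j)" if "Suc i < j" "j < length ps" for i j
    using no_shortcut[of "Suc i" j] that by auto
  ultimately show ?thesis using that P by (auto simp: induced_path_def)
qed

subsection \<open>Forbidden subgraphs of the complement\<close>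

lemma complement_not_dh_of_induced_P5:
  assumes sym: "symp E"
    and V: "a \<in> V" "b \<in> V" "c \<in> V" "d \<in> V" "e \<in> V"
    and dist: "distinct [a, b, c, d, e]"
    and edges: "E a b" "E b c" "E c d" "E d e"
    and non_edges: "\<not> E a c" "\<not> E a d" "\<not> E a e" "\<not> E b d" "\<not> E b e" "\<not> E c e"
  shows "\<not> distance_hereditary V (complement V E)"
proof -
  have U: "{0..<5::nat} = {0, 1, 2, 3, 4}" by auto
  have Es: "E x y \<longleftrightarrow> E y x" for x y using sym by (blast dest: sympD)
  \<comment> \<open>the complement of the path a b c d e is the house with cycle a c e b d and chord a e\<close>
  have "has_induced V (complement V E) {0..<5} house_edge"
    unfolding has_induced_def
    by (rule exI[of _ "\<lambda>i. [a, c, e, b, d] ! i"])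
      (use V dist edges non_edges in \<open>auto simp: U inj_on_def house_edge_def cycle_edge_def
        complement_def Es doubleton_eq_iff\<close>)
  then show ?thesis unfolding distance_hereditary_def by blast
qed

lemma complement_not_dh_of_induced_P4_K1:
  assumes sym: "symp E"
    and V: "a \<in> V" "b \<in> V" "c \<in> V" "d \<in> V" "e \<in> V"
    and dist: "distinct [a, b, c, d, e]"
    and edges: "E a b" "E b c" "E c d"
    and non_edges: "\<not> E a c" "\<not> E a d" "\<not> E b d" "\<not> E a e" "\<not> E b e" "\<not> E c e" "\<not> E d e"
  shows "\<not> distance_hereditary V (complement V E)"
proof -
  have U: "{0..<5::nat} = {0, 1, 2, 3, 4}" by auto
  have Es: "E x y \<longleftrightarrow> E y x" for x y using sym by (blast dest: sympD)
  \<comment> \<open>the complement of the path a b c d is the path b d a c, and e becomes universal\<close>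
  have "has_induced V (complement V E) {0..<5} gem_edge"
    unfolding has_induced_def
    by (rule exI[of _ "\<lambda>i. [b, d, a, c, e] ! i"])
      (use V dist edges non_edges in \<open>auto simp: U inj_on_def gem_edge_def
        complement_def Es doubleton_eq_iff\<close>)
  then show ?thesis unfolding distance_hereditary_def by blast
qed

lemma nonadjacent_cutvertices_not_DH_coDH:
  assumes G: "simple_graph V E" and cx: "cutvertex V E x" and cy: "cutvertex V E y"
    and xy: "x \<noteq> y" and r: "(x, y) \<in> reach V E" and not_adj: "\<not> E x y"
  shows "\<not> DH_coDH V E"
proof -
  have sym: "symp E" using simple_graph_symp[OF G] .
  have Es: "E p q \<longleftrightarrow> E q p" for p q using sym by (blast dest: sympD)
  have xV: "x \<in> V" and yV: "y \<in> V" using reach_memD[OF r] by auto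
  obtain ax where ax: "E x ax" "(ax, y) \<notin> reach (V - {x}) E"
    using cutvertex_private_neighbour[OF G cx, of y] yV xy by auto
  obtain ay where ay: "E y ay" "(ay, x) \<notin> reach (V - {y}) E"
    using cutvertex_private_neighbour[OF G cy, of x] xV xy by auto
  have axV: "ax \<in> V - {x}" and ayV: "ay \<in> V - {y}"
    using ax(1) ay(1) simple_graph_adjacent_mem[OF G] simple_graph_adjacent_neq[OF G] by blast+
  obtain ps where ps: "ps \<noteq> []" "hd ps = x" "last ps = y" "set ps \<subseteq> V" "induced_path E ps"
    using reach_imp_induced_path[OF r] by blast
  have s: "successively E ps" and dist: "distinct ps" using ps(5) by (auto simp: induced_path_def)
  have in_tl: "y \<in> set (tl ps)" and in_butlast: "x \<in> set (butlast ps)"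
    using ps xy by (cases ps; auto)+
  have sep_x: "ax \<noteq> p \<and> \<not> E ax p" if "p \<in> set (tl ps)" for p
    using separated_not_adjacent[OF ax(2)
        successively_tl_reach[OF sym s dist ps(4) that in_tl, unfolded ps(2)] axV] .
  have sep_y: "ay \<noteq> p \<and> \<not> E ay p" if "p \<in> set (butlast ps)" for p
    using separated_not_adjacent[OF ay(2)
        successively_butlast_reach[OF sym s dist ps(4) that in_butlast, unfolded ps(3)] ayV] .
  obtain p1 p2 rest where ps_eq: "ps = x # p1 # p2 # rest"
    using successively_nonadjacent_ends[OF s ps(1-3) xy not_adj] .
  have chordless: "\<not> E (ps ! i) (ps ! j)" if "Suc i < j" "j < length ps" for i j
    using ps(5) that by (simp add: induced_path_def)
  have "\<not> distance_hereditary V (complement V E)"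
  proof (cases rest)
    case Nil
    then have ps3: "ps = [x, p1, y]" using ps ps_eq by simp
    have "(ay, y) \<in> reach (V - {x}) E"
      using sep_y[of x] ps3 ayV yV xy ay(1) by (simp add: reach_edge Es)
    then have "ax \<noteq> ay \<and> \<not> E ax ay"
      using separated_not_adjacent[OF ax(2)] axV by blast
    then show ?thesis
      using complement_not_dh_of_induced_P5[OF sym, of ax V x p1 y ay]
        sep_x sep_y axV ayV ps(4) dist s ax(1) ay(1) not_adj ps3 by (auto simp: Es)
  next
    case (Cons p3 rest')
    have "\<not> E x p2" "\<not> E x p3" "\<not> E p1 p3"
      using chordless[of 0 2] chordless[of 0 3] chordless[of 1 3] ps_eq Cons by auto
    then show ?thesis
      using complement_not_dh_of_induced_P5[OF sym, of ax V x p1 p2 p3]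
        sep_x axV ps(4) dist s ax(1) ps_eq Cons by (auto simp: Es)
  qed
  then show ?thesis unfolding DH_coDH_def by blast
qed

lemma triangle_of_cutvertices_not_DH_coDH:
  assumes G: "simple_graph V E"
    and cut: "cutvertex V E u" "cutvertex V E v" "cutvertex V E w"
    and neq: "u \<noteq> v" "u \<noteq> w" "v \<noteq> w"
    and adj: "E u v" "E u w" "E v w"
  shows "\<not> DH_coDH V E"
proof -
  have sym: "symp E" using simple_graph_symp[OF G] .
  have Es: "E p q \<longleftrightarrow> E q p" for p q using sym by (blast dest: sympD)
  have uV: "u \<in> V" and vV: "v \<in> V"
    using adj simple_graph_adjacent_mem[OF G] by blast+
  have in_V: "a \<in> V - {c}" if "E c a" for a c
    using that simple_graph_adjacent_mem[OF G] simple_graph_adjacent_neq[OF G] by blast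
  have joined: "(p, q) \<in> reach (V - {c}) E" if "E p q" "p \<noteq> c" "q \<noteq> c" for p q c
    using that simple_graph_adjacent_mem[OF G] by (blast intro: reach_edge)
  obtain au where au: "E u au" "(au, v) \<notin> reach (V - {u}) E"
    using cutvertex_private_neighbour[OF G cut(1), of v] vV neq by auto
  obtain av where av: "E v av" "(av, u) \<notin> reach (V - {v}) E"
    using cutvertex_private_neighbour[OF G cut(2), of u] uV neq by auto
  obtain aw where aw: "E w aw" "(aw, u) \<notin> reach (V - {w}) E"
    using cutvertex_private_neighbour[OF G cut(3), of u] uV neq by auto
  note sep_u = separated_not_adjacent[OF au(2) _ in_V[OF au(1)]]
  note sep_v = separated_not_adjacent[OF av(2) _ in_V[OF av(1)]]
  note sep_w = separated_not_adjacent[OF aw(2) _ in_V[OF aw(1)]]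
  have aw_u: "aw \<noteq> u \<and> \<not> E aw u" and aw_v: "aw \<noteq> v \<and> \<not> E aw v"
    using sep_w[OF reach_refl] sep_w[OF joined[of v u w]] uV neq adj by (auto simp: Es)
  have av_u: "av \<noteq> u \<and> \<not> E av u" using sep_v[OF reach_refl] uV neq by auto
  have "(aw, u) \<in> reach (V - {v}) E"
    using reach_trans[OF joined joined, of aw w v u] aw aw_v adj neq by (auto simp: Es)
  then have av_aw: "av \<noteq> aw \<and> \<not> E av aw" using sep_v by blast
  have au_v: "au \<noteq> v \<and> \<not> E au v" using sep_u[OF reach_refl] vV neq by auto
  have "(av, v) \<in> reach (V - {u}) E" using joined[of av v u] av av_u neq by (auto simp: Es)
  then have au_av: "au \<noteq> av \<and> \<not> E au av" using sep_u by blast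
  have "(aw, v) \<in> reach (V - {u}) E"
    using reach_trans[OF joined joined, of aw w u v] aw aw_u adj neq by (auto simp: Es)
  then have au_aw: "au \<noteq> aw \<and> \<not> E au aw" using sep_u by blast
  have "\<not> distance_hereditary V (complement V E)"
    using complement_not_dh_of_induced_P4_K1[OF sym, of au V u v av aw]
      in_V[OF au(1)] in_V[OF av(1)] in_V[OF aw(1)] uV vV au(1) av(1) adj neq
      aw_u aw_v av_u av_aw au_v au_av au_aw
    by (auto simp: Es)
  then show ?thesis unfolding DH_coDH_def by blast
qed

theorem lemma4:
  fixes V :: "'a set" and E :: "'a \<Rightarrow> 'a \<Rightarrow> bool" and u v w :: 'a
  assumes "simple_graph V E"
    and "cutvertex V E u" and "cutvertex V E v" and "cutvertex V E w"
    and "u \<noteq> v" and "u \<noteq> w" and "v \<noteq> w"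
    and "(u, v) \<in> reach V E" and "(u, w) \<in> reach V E"
  shows "\<not> DH_coDH V E"
proof (cases "E u v \<and> E u w \<and> E v w")
  case True
  then show ?thesis using triangle_of_cutvertices_not_DH_coDH[OF assms(1-7)] by blast
next
  case False
  have "(v, w) \<in> reach V E"
    using reach_trans[OF reach_sym[OF simple_graph_symp[OF assms(1)] assms(8)] assms(9)] .
  with False show ?thesis
    using nonadjacent_cutvertices_not_DH_coDH[OF assms(1,2,3,5,8)]
      nonadjacent_cutvertices_not_DH_coDH[OF assms(1,2,4,6,9)]
      nonadjacent_cutvertices_not_DH_coDH[OF assms(1,3,4,7)] by blast
qed

end
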